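(* Let $p>0$, $M$ a positive integer and $Y\in\Upsilon^m_p\cap(\mathbb{C}^{M\times M})^m$. Then: (i) The map $X\mapsto K_p(X,Y)$, defined on $\Upsilon^m_p$ with values in $\coprod_N\mathbb{C}^{N\times N}\otimes\mathbb{C}^{M\times M}$, is a noncommutative function that belongs to $\overline{H^2_{m,p}}\otimes\mathbb{C}^{M\times M}$; that is, for all $e_1,e_2\in\mathbb{C}^M$ the function $e_1^\ast K_p(\cdot,Y)e_2: X\mapsto\sum_{w\in\mathcal{F}_m}p^{|w|}\,(e_1^\ast(Y^w)^\ast e_2)\,X^w$ belongs to $\overline{H^2_{m,p}}$. (ii) For all $e_1,e_2\in\mathbb{C}^M$ and all $f\in\overline{H^2_{m,p}}$, \[ \langle f,\,e_1^\ast K_p(\cdot,Y)e_2\rangle_{\ell^2_p(\mathcal{F}_m)}=e_2^\ast f(Y)e_1. \]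
   Context: $\mathcal{F}_m$ is the free monoid on $\{1,\dots,m\}$, $\mathcal{F}_m^{[l]}$ the words of length $l$; for $X\in(\mathbb{C}^{N\times N})^m$, $X^w=X_{w_1}\cdots X_{w_t}$, $X^\emptyset=I_N$. For $p>0$, $\ell^2_p(\mathcal{F}_m)$ is the Hilbert space of complex sequences $\{f_w\}$ with $\sum_wp^{-|w|}|f_w|^2<\infty$, with inner product $\langle\{f_w\},\{g_w\}\rangle=\sum_wp^{-|w|}f_w\overline{g_w}$. $\Upsilon^m_p$ is the set of $X\in\coprod_N(\mathbb{C}^{N\times N})^m$ such that $\sum_{w\in\mathcal{F}_m}p^{|w|}(X^w)^\ast X^w$ converges. For $X,Y\in\Upsilon^m_p$ (with $X$ of size $N$, $Y$ of size $M$), $K_p(X,Y)=\sum_{l=0}^\infty\sum_{w\in\mathcal{F}_m^{[l]}}p^l\,X^w\otimes(Y^w)^\ast\in\mathbb{C}^{N\times N}\otimes\mathbb{C}^{M\times M}$ (the series converges). $\overline{H^2_{m,p}}$ is the space of noncommutative functions $f:\Upsilon^m_p\to\coprod_N\mathbb{C}^{N\times N}$ (mapping level $N$ to $\mathbb{C}^{N\times N}$, respecting direct sums and similarities) for which there is $\{f_w\}\in\ell^2_p(\mathcal{F}_m)$ with $f(X)=\sum_{l=0}^\infty\sum_{w\in\mathcal{F}_m^{[l]}}f_wX^w$ for all $X\in\Upsilon^m_p$; it is a Hilbert space with the inner product of $\ell^2_p(\mathcal{F}_m)$ applied to the coefficient sequences. For $e_1,e_2\in\mathbb{C}^M$ and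 a function $F$ with values in $\mathbb{C}^{N\times N}\otimes\mathbb{C}^{M\times M}$, $e_1^\ast Fe_2$ denotes $(I_N\otimes e_1^\ast)F(I_N\otimes e_2)$. *)

theory Defs
  imports "Jordan_Normal_Form.Schur_Decomposition" "HOL-Analysis.Infinite_Sum"
begin

text \<open>Words over the alphabet {0,...,m-1} (0-based encoding of {1,...,m}).\<close>
definition allwords :: "nat \<Rightarrow> nat list set" where
  "allwords m = {w. set w \<subseteq> {..<m}}"

definition words :: "nat \<Rightarrow> nat \<Rightarrow> nat list set" where
  "words m l = {w. length w = l \<and> set w \<subseteq> {..<m}}"

text \<open>A point of the disjoint union over N of m-tuples of N x N matrices is a pair (N, X).\<close>
definition ncpt :: "nat \<Rightarrow> nat \<Rightarrow> complex mat list \<Rightarrow> bool" where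
  "ncpt m N X \<longleftrightarrow> 0 < N \<and> length X = m \<and> (\<forall>A\<in>set X. A \<in> carrier_mat N N)"

definition mpow :: "nat \<Rightarrow> complex mat list \<Rightarrow> nat list \<Rightarrow> complex mat" where
  "mpow N X w = foldr (\<lambda>i A. X ! i * A) w (1\<^sub>m N)"

definition upsilon :: "nat \<Rightarrow> real \<Rightarrow> (nat \<times> complex mat list) set" where
  "upsilon m p = {(N, X). ncpt m N X \<and>
     (\<forall>i<N. \<forall>j<N. summable (\<lambda>l. \<Sum>w\<in>words m l.
        complex_of_real (p ^ l) * (mat_adjoint (mpow N X w) * mpow N X w) $$ (i, j)))}"

definition kron :: "complex mat \<Rightarrow> complex mat \<Rightarrow> complex mat" where
  "kron A B = mat (dim_row A * dim_row B) (dim_col A * dim_col B)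
     (\<lambda>(i, j). A $$ (i div dim_row B, j div dim_col B) * B $$ (i mod dim_row B, j mod dim_col B))"

definition Kp :: "nat \<Rightarrow> real \<Rightarrow> nat \<Rightarrow> complex mat list \<Rightarrow> nat \<Rightarrow> complex mat list \<Rightarrow> complex mat" where
  "Kp m p N X M Y = mat (N * M) (N * M) (\<lambda>(i, j). \<Sum>l. \<Sum>w\<in>words m l.
      complex_of_real (p ^ l) * kron (mpow N X w) (mat_adjoint (mpow M Y w)) $$ (i, j))"

definition vstar :: "complex vec \<Rightarrow> complex mat" where
  "vstar e = mat 1 (dim_vec e) (\<lambda>(_, j). cnj (e $ j))"

definition vcol :: "complex vec \<Rightarrow> complex mat" where
  "vcol e = mat (dim_vec e) 1 (\<lambda>(i, _). e $ i)"

text \<open>e1^* F e2 = (I_N \<otimes> e1^*) F (I_N \<otimes> e2).\<close>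
definition sandwich :: "nat \<Rightarrow> complex vec \<Rightarrow> complex mat \<Rightarrow> complex vec \<Rightarrow> complex mat" where
  "sandwich N e1 F e2 = kron (1\<^sub>m N) (vstar e1) * F * kron (1\<^sub>m N) (vcol e2)"

definition nc_function :: "nat \<Rightarrow> (nat \<times> complex mat list) set \<Rightarrow> (nat \<times> complex mat list \<Rightarrow> complex mat) \<Rightarrow> bool" where
  "nc_function m D f \<longleftrightarrow>
     (\<forall>(N, X)\<in>D. f (N, X) \<in> carrier_mat N N) \<and>
     (\<forall>(N, X)\<in>D. \<forall>(N', X')\<in>D.
        (N + N', map2 (\<lambda>A B. four_block_mat A (0\<^sub>m N N') (0\<^sub>m N' N) B) X X') \<in> D \<longrightarrow>
        f (N + N', map2 (\<lambda>A B. four_block_mat A (0\<^sub>m N N') (0\<^sub>m N' N) B) X X')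
          = four_block_mat (f (N, X)) (0\<^sub>m N N') (0\<^sub>m N' N) (f (N', X'))) \<and>
     (\<forall>(N, X)\<in>D. \<forall>S T. S \<in> carrier_mat N N \<longrightarrow> T \<in> carrier_mat N N \<longrightarrow>
        S * T = 1\<^sub>m N \<longrightarrow> T * S = 1\<^sub>m N \<longrightarrow>
        (N, map (\<lambda>A. S * A * T) X) \<in> D \<longrightarrow>
        f (N, map (\<lambda>A. S * A * T) X) = S * f (N, X) * T)"

definition ell2p :: "nat \<Rightarrow> real \<Rightarrow> (nat list \<Rightarrow> complex) \<Rightarrow> bool" where
  "ell2p m p c \<longleftrightarrow> (\<lambda>w. inverse (p ^ length w) * (cmod (c w))\<^sup>2) summable_on allwords m"

definition h2_rep :: "nat \<Rightarrow> real \<Rightarrow> (nat \<times> complex mat list \<Rightarrow> complex mat) \<Rightarrow> (nat list \<Rightarrow> complex) \<Rightarrow> bool" where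
  "h2_rep m p f c \<longleftrightarrow> ell2p m p c \<and>
     (\<forall>(N, X)\<in>upsilon m p. f (N, X) \<in> carrier_mat N N \<and>
        (\<forall>i<N. \<forall>j<N. (\<lambda>l. \<Sum>w\<in>words m l. c w * mpow N X w $$ (i, j)) sums (f (N, X) $$ (i, j))))"

definition in_H2 :: "nat \<Rightarrow> real \<Rightarrow> (nat \<times> complex mat list \<Rightarrow> complex mat) \<Rightarrow> bool" where
  "in_H2 m p f \<longleftrightarrow> nc_function m (upsilon m p) f \<and> (\<exists>c. h2_rep m p f c)"

definition h2_coef :: "nat \<Rightarrow> real \<Rightarrow> (nat \<times> complex mat list \<Rightarrow> complex mat) \<Rightarrow> nat list \<Rightarrow> complex" where
  "h2_coef m p f = (SOME c. h2_rep m p f c)"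

definition h2_inner :: "nat \<Rightarrow> real \<Rightarrow> (nat \<times> complex mat list \<Rightarrow> complex mat) \<Rightarrow> (nat \<times> complex mat list \<Rightarrow> complex mat) \<Rightarrow> complex" where
  "h2_inner m p f g = (\<Sum>\<^sub>\<infinity>w\<in>allwords m.
      complex_of_real (inverse (p ^ length w)) * h2_coef m p f w * cnj (h2_coef m p g w))"

end

theory Submission
  imports Defs
begin

text \<open>Membership of \<open>Y\<close> in \<open>\<Upsilon>\<close> forces each entry \<open>w \<mapsto> (Y\<^sup>w)\<^sub>a\<^sub>b\<close> to be square summable
  against the weight \<open>p\<^sup>|\<^sup>w\<^sup>|\<close>, i.e. to lie in the dual of \<open>\<ell>\<^sup>2\<^sub>p\<close>. Hence every entry of
  \<open>K\<^sub>p(X, Y)\<close> is an absolutely convergent sum over words, and \<open>e\<^sub>1\<^sup>* K\<^sub>p(\<cdot>, Y) e\<^sub>2\<close> is the series with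
  coefficients \<open>p\<^sup>|\<^sup>w\<^sup>| e\<^sub>1\<^sup>* (Y\<^sup>w)\<^sup>* e\<^sub>2\<close>, which lie in \<open>\<ell>\<^sup>2\<^sub>p\<close>. Any function given by such a
  word expansion respects direct sums and similarities, because \<open>X \<mapsto> X\<^sup>w\<close> does. Coefficients are
  unique (nilpotent shift tuples isolate a single word), so the \<open>H\<^sup>2\<close> inner product of \<open>f\<close> with the
  kernel is \<open>\<Sum>\<^sub>w f\<^sub>w e\<^sub>2\<^sup>* Y\<^sup>w e\<^sub>1 = e\<^sub>2\<^sup>* f(Y) e\<^sub>1\<close>.\<close>

lemma finite_words [simp]: "finite (words m l)"
  using finite_lists_length_eq[of "{..<m}" l] by (simp add: words_def conj_commute)

lemma has_sum_imp_sums_by_length: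
  fixes t :: "nat list \<Rightarrow> complex"
  assumes "(t has_sum S) (allwords m)"
  shows "(\<lambda>l. \<Sum>w\<in>words m l. t w) sums S"
proof -
  have inj: "inj_on snd (Sigma UNIV (words m))" by (auto simp: inj_on_def words_def)
  have "snd ` Sigma UNIV (words m) = allwords m"
    by (force simp: allwords_def words_def image_iff)
  then have "((t \<circ> snd) has_sum S) (Sigma UNIV (words m))"
    using assms has_sum_reindex[OF inj, of t S] by simp
  then have "((\<lambda>l. \<Sum>w\<in>words m l. t w) has_sum S) UNIV"
    by (rule has_sum_Sigma'[where B="words m"]) (simp_all add: o_def)
  then show ?thesis by (rule has_sum_imp_sums)
qed

lemma summable_on_allwords_by_length:
  fixes g :: "nat list \<Rightarrow> real"
  assumes nonneg: "\<And>w. g w \<ge> 0" and summable: "summable (\<lambda>l. \<Sum>w\<in>words m l. g w)"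
  shows "g summable_on allwords m"
proof (rule nonneg_bdd_above_summable_on)
  show "bdd_above (sum g ` {F. F \<subseteq> allwords m \<and> finite F})"
  proof (rule bdd_aboveI2)
    fix F assume F: "F \<in> {F. F \<subseteq> allwords m \<and> finite F}"
    define L where "L = Suc (Max (insert 0 (length ` F)))"
    have "F \<subseteq> (\<Union>l<L. words m l)"
      using F by (auto simp: L_def words_def allwords_def le_imp_less_Suc)
    then have "sum g F \<le> sum g (\<Union>l<L. words m l)"
      by (intro sum_mono2) (auto simp: nonneg)
    also have "\<dots> = (\<Sum>l<L. sum g (words m l))"
      by (rule sum.UNION_disjoint) (simp_all, auto simp: words_def)
    also have "\<dots> \<le> (\<Sum>l. sum g (words m l))"
      by (rule sum_le_suminf) (auto simp: summable nonneg sum_nonneg)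
    finally show "sum g F \<le> (\<Sum>l. sum g (words m l))" .
  qed
qed (rule nonneg)

lemma has_sum_sum_finite:
  fixes f :: "'i \<Rightarrow> 'a \<Rightarrow> 'b::topological_comm_monoid_add"
  assumes "finite I" "\<And>i. i \<in> I \<Longrightarrow> (f i has_sum s i) A"
  shows "((\<lambda>x. \<Sum>i\<in>I. f i x) has_sum (\<Sum>i\<in>I. s i)) A"
  using assms by (induction I rule: finite_induct) (auto intro!: has_sum_add)

lemma mpow_Nil [simp]: "mpow N X [] = 1\<^sub>m N"
  by (simp add: mpow_def)

lemma mpow_Cons [simp]: "mpow N X (i # w) = X ! i * mpow N X w"
  by (simp add: mpow_def)

lemma mpow_carrier:
  assumes "ncpt m N X" "set w \<subseteq> {..<m}"
  shows "mpow N X w \<in> carrier_mat N N"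
  using assms(2)
proof (induction w)
  case (Cons i w)
  then have "X ! i \<in> carrier_mat N N" using assms(1) by (auto simp: ncpt_def)
  with Cons show ?case by auto
qed simp

lemma mult_four_block_diag_mat:
  assumes "A \<in> carrier_mat n n" "B \<in> carrier_mat n' n'" "C \<in> carrier_mat n n" "D \<in> carrier_mat n' n'"
  shows "four_block_mat A (0\<^sub>m n n') (0\<^sub>m n' n) B * four_block_mat C (0\<^sub>m n n') (0\<^sub>m n' n) D
       = four_block_mat (A * C) (0\<^sub>m n n') (0\<^sub>m n' n) (B * D)"
  using assms
  by (subst mult_four_block_mat[OF assms(1) zero_carrier_mat zero_carrier_mat assms(2)
        assms(3) zero_carrier_mat zero_carrier_mat assms(4)]) simp

lemma mpow_direct_sum:
  assumes X: "ncpt m N X" and X': "ncpt m N' X'" and w: "set w \<subseteq> {..<m}"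
  shows "mpow (N + N') (map2 (\<lambda>A B. four_block_mat A (0\<^sub>m N N') (0\<^sub>m N' N) B) X X') w
       = four_block_mat (mpow N X w) (0\<^sub>m N N') (0\<^sub>m N' N) (mpow N' X' w)"
  using w
proof (induction w)
  case (Cons i w)
  then have "i < m" "set w \<subseteq> {..<m}" by auto
  with X X' show ?case
    using Cons.IH mpow_carrier[OF X] mpow_carrier[OF X']
    by (auto simp: ncpt_def intro!: mult_four_block_diag_mat)
qed simp

lemma conjugate_mult_mat:
  fixes S T A B :: "'a::semiring_1 mat"
  assumes S: "S \<in> carrier_mat n n" and T: "T \<in> carrier_mat n n" and TS: "T * S = 1\<^sub>m n"
    and "A \<in> carrier_mat n n" "B \<in> carrier_mat n n"
  shows "(S * A * T) * (S * B * T) = S * (A * B) * T"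
proof -
  have cancel: "T * (S * C) = C" if "C \<in> carrier_mat n n" for C
    by (metis assoc_mult_mat[OF T S that] TS left_mult_one_mat[OF that])
  have "A * T \<in> carrier_mat n n" "B * T \<in> carrier_mat n n" "A * B \<in> carrier_mat n n"
    using assms by auto
  with assms show ?thesis
    by (simp add: cancel assoc_mult_mat[of _ n n _ n _ n])
qed

lemma mpow_similar:
  assumes X: "ncpt m N X" and S: "S \<in> carrier_mat N N" and T: "T \<in> carrier_mat N N"
    and ST: "S * T = 1\<^sub>m N" and TS: "T * S = 1\<^sub>m N" and w: "set w \<subseteq> {..<m}"
  shows "mpow N (map (\<lambda>A. S * A * T) X) w = S * mpow N X w * T"
  using w
proof (induction w)
  case Nil
  show ?case using S ST by simp
next
  case (Cons i w)
  then have "i < m" "set w \<subseteq> {..<m}" by auto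
  with X show ?case
    using Cons.IH mpow_carrier[OF X] conjugate_mult_mat[OF S T TS]
    by (auto simp: ncpt_def)
qed

lemma ell2p_inverse_iff:
  "ell2p m (inverse p) g \<longleftrightarrow> (\<lambda>w. p ^ length w * (cmod (g w))\<^sup>2) summable_on allwords m"
  by (simp add: ell2p_def power_inverse)

lemma ell2p_cmult:
  assumes "ell2p m q g"
  shows "ell2p m q (\<lambda>w. c * g w)"
proof -
  have "(\<lambda>w. (cmod c)\<^sup>2 * (inverse (q ^ length w) * (cmod (g w))\<^sup>2)) summable_on allwords m"
    using assms unfolding ell2p_def by (rule summable_on_cmult_right)
  then show ?thesis unfolding ell2p_def by (simp add: norm_mult power_mult_distrib mult_ac)
qed

lemma ell2p_cnj: "ell2p m q g \<Longrightarrow> ell2p m q (\<lambda>w. cnj (g w))"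
  by (simp add: ell2p_def)

lemma cmod_add_square_le: "(cmod (a + b))\<^sup>2 \<le> 2 * (cmod a)\<^sup>2 + 2 * (cmod b)\<^sup>2"
proof -
  have "(cmod (a + b))\<^sup>2 \<le> (cmod a + cmod b)\<^sup>2"
    by (simp add: norm_triangle_ineq power_mono)
  also have "\<dots> \<le> 2 * (cmod a)\<^sup>2 + 2 * (cmod b)\<^sup>2"
    using sum_squares_bound[of "cmod a" "cmod b"] by (simp add: power2_sum)
  finally show ?thesis .
qed

lemma ell2p_add:
  assumes "ell2p m q g" "ell2p m q h" "q > 0"
  shows "ell2p m q (\<lambda>w. g w + h w)"
proof -
  let ?wt = "\<lambda>w. inverse (q ^ length w)"
  have "(\<lambda>w. 2 * (?wt w * (cmod (g w))\<^sup>2) + 2 * (?wt w * (cmod (h w))\<^sup>2)) summable_on allwords m"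
    using assms unfolding ell2p_def by (intro summable_on_add summable_on_cmult_right)
  then show ?thesis unfolding ell2p_def
  proof (rule summable_on_comparison_test)
    fix w
    show "?wt w * (cmod (g w + h w))\<^sup>2 \<le> 2 * (?wt w * (cmod (g w))\<^sup>2) + 2 * (?wt w * (cmod (h w))\<^sup>2)"
      using mult_left_mono[OF cmod_add_square_le, of "?wt w"] assms(3) by (simp add: algebra_simps)
    show "0 \<le> ?wt w * (cmod (g w + h w))\<^sup>2" using assms(3) by simp
  qed
qed

lemma ell2p_sum:
  assumes "finite I" "\<And>i. i \<in> I \<Longrightarrow> ell2p m q (g i)" "q > 0"
  shows "ell2p m q (\<lambda>w. \<Sum>i\<in>I. g i w)"
  using assms
  by (induction I rule: finite_induct) (auto simp: ell2p_def intro!: ell2p_add[unfolded ell2p_def])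

lemma ell2p_mult_weight:
  assumes "ell2p m (inverse p) g" "p > 0"
  shows "ell2p m p (\<lambda>w. of_real (p ^ length w) * g w)"
proof -
  have "cmod (of_real (p ^ length w) * g w) = p ^ length w * cmod (g w)" for w
    using assms(2) by (simp add: norm_mult norm_power)
  then have "inverse (p ^ length w) * (cmod (of_real (p ^ length w) * g w))\<^sup>2 = p ^ length w * (cmod (g w))\<^sup>2" for w
    using assms(2) by (simp add: power_mult_distrib power2_eq_square)
  then show ?thesis using assms(1) unfolding ell2p_def by (simp add: power_inverse)
qed

lemma mult_le_weighted_squares:
  fixes x y r :: real
  assumes "r > 0" "x \<ge> 0" "y \<ge> 0"
  shows "x * y \<le> inverse r * x\<^sup>2 + r * y\<^sup>2"
proof -
  have "0 \<le> inverse r * (x - r * y)\<^sup>2 + x * y" using assms by simp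
  also have "\<dots> = inverse r * x\<^sup>2 + r * y\<^sup>2 - x * y"
    using assms by (simp add: power2_eq_square field_simps)
  finally show ?thesis by simp
qed

text \<open>With the weight inverted, \<open>ell2p m (inverse p)\<close> is the dual of \<open>ell2p m p\<close> under the
  pairing \<open>\<Sum>\<^sub>w c\<^sub>w d\<^sub>w\<close>; the bound is the weighted Cauchy--Schwarz inequality.\<close>
lemma summable_on_mult_ell2p:
  assumes c: "ell2p m p c" and d: "ell2p m (inverse p) d" and p: "p > 0"
  shows "(\<lambda>w. c w * d w) summable_on allwords m"
proof (rule abs_summable_summable)
  have "(\<lambda>w. inverse (p ^ length w) * (cmod (c w))\<^sup>2 + p ^ length w * (cmod (d w))\<^sup>2)
      summable_on allwords m"
    using c d[unfolded ell2p_inverse_iff] unfolding ell2p_def by (intro summable_on_add)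
  then show "(\<lambda>w. norm (c w * d w)) summable_on allwords m"
    by (rule summable_on_comparison_test)
       (use p in \<open>auto simp: norm_mult intro!: mult_le_weighted_squares\<close>)
qed

lemma mat_adjoint_index [simp]:
  "i < dim_col A \<Longrightarrow> j < dim_row A \<Longrightarrow> mat_adjoint A $$ (i, j) = cnj (A $$ (j, i))"
  "dim_row (mat_adjoint A) = dim_col A" "dim_col (mat_adjoint A) = dim_row A"
  by (auto simp: mat_adjoint_def mat_of_rows_index)

lemma adjoint_mult_self_diag:
  assumes "A \<in> carrier_mat N N" "b < N"
  shows "(mat_adjoint A * A) $$ (b, b) = of_real (\<Sum>k<N. (cmod (A $$ (k, b)))\<^sup>2)"
proof -
  have "(mat_adjoint A * A) $$ (b, b) = (\<Sum>k<N. cnj (A $$ (k, b)) * A $$ (k, b))"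
    using assms by (auto simp: scalar_prod_def lessThan_atLeast0 intro!: sum.cong)
  also have "\<dots> = (\<Sum>k<N. of_real ((cmod (A $$ (k, b)))\<^sup>2))"
    by (rule sum.cong[OF refl]) (subst complex_norm_square, rule mult.commute)
  finally show ?thesis by (simp only: of_real_sum)
qed

lemma upsilon_ncpt: "(N, X) \<in> upsilon m p \<Longrightarrow> ncpt m N X"
  by (simp add: upsilon_def)

text \<open>The diagonal of \<open>\<Sum> p\<^sup>|\<^sup>w\<^sup>| (X\<^sup>w)\<^sup>* X\<^sup>w\<close> collects the squared column norms of the \<open>X\<^sup>w\<close>.\<close>
lemma upsilon_entry_ell2p:
  assumes XU: "(N, X) \<in> upsilon m p" and p: "p > 0" and ab: "a < N" "b < N"
  shows "ell2p m (inverse p) (\<lambda>w. mpow N X w $$ (a, b))"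
proof -
  define col where "col w = (\<Sum>k<N. (cmod (mpow N X w $$ (k, b)))\<^sup>2)" for w
  have diag_eq: "(\<Sum>w\<in>words m l. complex_of_real (p ^ l) * (mat_adjoint (mpow N X w) * mpow N X w) $$ (b, b))
      = of_real (\<Sum>w\<in>words m l. p ^ l * col w)" for l
    using mpow_carrier[OF upsilon_ncpt[OF XU]]
    by (auto simp: col_def words_def adjoint_mult_self_diag[OF _ ab(2)] intro!: sum.cong)
  have "summable (\<lambda>l. \<Sum>w\<in>words m l. complex_of_real (p ^ l) * (mat_adjoint (mpow N X w) * mpow N X w) $$ (b, b))"
    using XU ab unfolding upsilon_def by auto
  then have col_summable: "summable (\<lambda>l. \<Sum>w\<in>words m l. p ^ l * col w)"
    unfolding diag_eq by (simp only: summable_complex_of_real)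
  show ?thesis unfolding ell2p_inverse_iff
  proof (rule summable_on_allwords_by_length)
    show "summable (\<lambda>l. \<Sum>w\<in>words m l. p ^ length w * (cmod (mpow N X w $$ (a, b)))\<^sup>2)"
    proof (rule summable_comparison_test'[OF col_summable])
      have "(cmod (mpow N X w $$ (a, b)))\<^sup>2 \<le> col w" for w
        unfolding col_def by (rule member_le_sum) (use ab in auto)
      then show "norm (\<Sum>w\<in>words m l. p ^ length w * (cmod (mpow N X w $$ (a, b)))\<^sup>2)
          \<le> (\<Sum>w\<in>words m l. p ^ l * col w)" for l
        unfolding real_norm_def using p
        by (subst abs_of_nonneg) (auto simp: words_def intro!: sum_mono mult_left_mono sum_nonneg)
    qed
  qed (use p in simp)
qed

lemma mult3_index:
  assumes "P \<in> carrier_mat n1 n2" "K \<in> carrier_mat n2 n3" "Q \<in> carrier_mat n3 n4" "i < n1" "j < n4"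
  shows "(P * K * Q) $$ (i, j) = (\<Sum>c<n3. (\<Sum>d<n2. P $$ (i, d) * K $$ (d, c)) * Q $$ (c, j))"
proof -
  have "(P * K * Q) $$ (i, j) = Matrix.row (P * K) i \<bullet> Matrix.col Q j"
    using assms by (intro index_mult_mat(1)) auto
  also have "\<dots> = (\<Sum>c<n3. (P * K) $$ (i, c) * Q $$ (c, j))"
    using assms unfolding scalar_prod_def by (intro sum.cong) (auto simp: lessThan_atLeast0)
  also have "\<dots> = (\<Sum>c<n3. (\<Sum>d<n2. P $$ (i, d) * K $$ (d, c)) * Q $$ (c, j))"
    using assms by (auto simp: scalar_prod_def lessThan_atLeast0 intro!: sum.cong)
  finally show ?thesis .
qed

lemma block_index_less: "i < N \<Longrightarrow> a < M \<Longrightarrow> i * M + a < N * (M::nat)"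
  using mult_le_mono1[of "Suc i" N M] by simp

lemma sum_block_row:
  fixes g :: "nat \<Rightarrow> 'a::comm_monoid_add"
  assumes "i < N"
  shows "(\<Sum>d<N * M. if d div M = i then g d else 0) = (\<Sum>a<M. g (i * M + a))"
proof -
  have "{..<N * M} \<inter> {d. d div M = i} = (\<lambda>a. i * M + a) ` {..<M}"
  proof (intro equalityI subsetI)
    fix d assume d: "d \<in> {..<N * M} \<inter> {d. d div M = i}"
    then have "M > 0" by (cases M) auto
    with d have "d = i * M + d mod M" "d mod M < M"
      by (auto simp: mult.commute[of M] intro: div_mult_mod_eq[symmetric])
    then show "d \<in> (\<lambda>a. i * M + a) ` {..<M}" by blast
  qed (use assms block_index_less in auto)
  moreover have "(\<Sum>d<N * M. if d div M = i then g d else 0) = sum g ({..<N * M} \<inter> {d. d div M = i})"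
    by (simp add: sum.inter_restrict)
  ultimately have "(\<Sum>d<N * M. if d div M = i then g d else 0) = sum g ((\<lambda>a. i * M + a) ` {..<M})"
    by simp
  also have "\<dots> = (\<Sum>a<M. g (i * M + a))"
    by (subst sum.reindex) (auto simp: inj_on_def)
  finally show ?thesis .
qed

lemma sandwich_index:
  assumes K: "K \<in> carrier_mat (N * M) (N * M)" and e: "e1 \<in> carrier_vec M" "e2 \<in> carrier_vec M"
    and ij: "i < N" "j < N" and M: "M > 0"
  shows "sandwich N e1 K e2 $$ (i, j) = (\<Sum>a<M. \<Sum>b<M. cnj (e1 $ a) * K $$ (i * M + a, j * M + b) * e2 $ b)"
proof -
  define P where "P = kron (1\<^sub>m N) (vstar e1)"
  define Q where "Q = kron (1\<^sub>m N) (vcol e2)"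
  have PQ: "P \<in> carrier_mat N (N * M)" "Q \<in> carrier_mat (N * M) N"
    using e by (simp_all add: P_def Q_def kron_def vstar_def vcol_def)
  have "P $$ (i, d) = (if d div M = i then cnj (e1 $ (d mod M)) else 0)"
    "Q $$ (d, j) = (if d div M = j then e2 $ (d mod M) else 0)" if "d < N * M" for d
    using that ij e M by (auto simp: P_def Q_def kron_def vstar_def vcol_def less_mult_imp_div_less)
  then have "sandwich N e1 K e2 $$ (i, j)
      = (\<Sum>c<N * M. if c div M = j then (\<Sum>d<N * M. if d div M = i then cnj (e1 $ (d mod M)) * K $$ (d, c) else 0) * e2 $ (c mod M) else 0)"
    unfolding sandwich_def P_def[symmetric] Q_def[symmetric] mult3_index[OF PQ(1) K PQ(2) ij]
    by (intro sum.cong) (auto intro!: sum.cong)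
  also have "\<dots> = (\<Sum>b<M. \<Sum>a<M. cnj (e1 $ a) * K $$ (i * M + a, j * M + b) * e2 $ b)"
    using ij by (simp add: sum_block_row sum_distrib_right)
  finally show ?thesis by (subst sum.swap)
qed

lemma sandwich_carrier: "sandwich N e1 K e2 \<in> carrier_mat N N"
  unfolding sandwich_def carrier_mat_def kron_def vstar_def vcol_def by simp

lemma vstar_mult_vcol_index:
  assumes "A \<in> carrier_mat M M" "e1 \<in> carrier_vec M" "e2 \<in> carrier_vec M"
  shows "(vstar e1 * A * vcol e2) $$ (0, 0) = (\<Sum>a<M. \<Sum>b<M. cnj (e1 $ a) * A $$ (a, b) * e2 $ b)"
proof -
  have "vstar e1 \<in> carrier_mat 1 M" "vcol e2 \<in> carrier_mat M 1"
    using assms by (simp_all add: vstar_def vcol_def)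
  from mult3_index[OF this(1) assms(1) this(2)]
  have "(vstar e1 * A * vcol e2) $$ (0, 0) = (\<Sum>b<M. \<Sum>a<M. cnj (e1 $ a) * A $$ (a, b) * e2 $ b)"
    using assms by (simp add: vstar_def vcol_def sum_distrib_right)
  also have "\<dots> = (\<Sum>a<M. \<Sum>b<M. cnj (e1 $ a) * A $$ (a, b) * e2 $ b)"
    by (rule sum.swap)
  finally show ?thesis .
qed

lemma Kp_index_has_sum:
  assumes XU: "(N, X) \<in> upsilon m p" and YU: "(M, Y) \<in> upsilon m p" and p: "p > 0"
    and ij: "i < N" "j < N" and ab: "a < M" "b < M"
  shows "((\<lambda>w. of_real (p ^ length w) * mpow N X w $$ (i, j) * cnj (mpow M Y w $$ (b, a)))
           has_sum Kp m p N X M Y $$ (i * M + a, j * M + b)) (allwords m)"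
proof -
  define t where "t w = of_real (p ^ length w) * mpow N X w $$ (i, j) * cnj (mpow M Y w $$ (b, a))" for w
  have "t summable_on allwords m"
    using summable_on_mult_ell2p[OF ell2p_mult_weight[OF upsilon_entry_ell2p[OF XU p ij] p]
        ell2p_cnj[OF upsilon_entry_ell2p[OF YU p ab(2,1)]] p]
    by (simp add: t_def[abs_def] mult.assoc)
  then obtain S where S: "(t has_sum S) (allwords m)"
    unfolding summable_on_def by blast
  have "complex_of_real (p ^ l) * kron (mpow N X w) (mat_adjoint (mpow M Y w)) $$ (i * M + a, j * M + b) = t w"
    if "w \<in> words m l" for w l
  proof -
    have "mpow N X w \<in> carrier_mat N N" "mpow M Y w \<in> carrier_mat M M" "length w = l"
      using that mpow_carrier[OF upsilon_ncpt[OF XU]] mpow_carrier[OF upsilon_ncpt[OF YU]]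
      by (auto simp: words_def)
    moreover have "(i * M + a) div M = i" "(i * M + a) mod M = a" "(j * M + b) div M = j" "(j * M + b) mod M = b"
      using ab by auto
    ultimately show ?thesis
      using ab block_index_less[OF ij(1) ab(1)] block_index_less[OF ij(2) ab(2)]
      by (simp add: kron_def t_def)
  qed
  then have "Kp m p N X M Y $$ (i * M + a, j * M + b) = (\<Sum>l. \<Sum>w\<in>words m l. t w)"
    using block_index_less[OF ij(1) ab(1)] block_index_less[OF ij(2) ab(2)]
    by (simp add: Kp_def)
  also have "\<dots> = S"
    using has_sum_imp_sums_by_length[OF S] by (rule sums_unique[symmetric])
  finally show ?thesis using S by (simp add: t_def[abs_def])
qed

definition word_sandwich :: "nat \<Rightarrow> complex mat list \<Rightarrow> complex vec \<Rightarrow> complex vec \<Rightarrow> nat list \<Rightarrow> complex" where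
  "word_sandwich M Y e1 e2 w = (\<Sum>a<M. \<Sum>b<M. cnj (e1 $ a) * mpow M Y w $$ (a, b) * e2 $ b)"

text \<open>In the paper's notation this is \<open>p\<^sup>|\<^sup>w\<^sup>| e\<^sub>1\<^sup>* (Y\<^sup>w)\<^sup>* e\<^sub>2\<close>.\<close>
definition kernel_coef :: "real \<Rightarrow> nat \<Rightarrow> complex mat list \<Rightarrow> complex vec \<Rightarrow> complex vec \<Rightarrow> nat list \<Rightarrow> complex" where
  "kernel_coef p M Y e1 e2 w = of_real (p ^ length w) * cnj (word_sandwich M Y e2 e1 w)"

lemma word_sandwich_ell2p:
  assumes YU: "(M, Y) \<in> upsilon m p" and p: "p > 0"
  shows "ell2p m (inverse p) (word_sandwich M Y e1 e2)"
proof -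
  have "ell2p m (inverse p) (\<lambda>w. \<Sum>a<M. \<Sum>b<M. (cnj (e1 $ a) * e2 $ b) * mpow M Y w $$ (a, b))"
    by (intro ell2p_sum ell2p_cmult upsilon_entry_ell2p[OF YU p]) (use p in auto)
  then show ?thesis unfolding word_sandwich_def[abs_def] by (simp add: mult_ac)
qed

lemma kernel_coef_ell2p:
  assumes "(M, Y) \<in> upsilon m p" "p > 0"
  shows "ell2p m p (kernel_coef p M Y e1 e2)"
  unfolding kernel_coef_def[abs_def]
  using ell2p_mult_weight[OF ell2p_cnj[OF word_sandwich_ell2p[OF assms]] assms(2)] .

lemma sandwich_Kp_has_sum:
  assumes XU: "(N, X) \<in> upsilon m p" and YU: "(M, Y) \<in> upsilon m p" and p: "p > 0"
    and e: "e1 \<in> carrier_vec M" "e2 \<in> carrier_vec M" and ij: "i < N" "j < N" and M: "M > 0"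
  shows "((\<lambda>w. kernel_coef p M Y e1 e2 w * mpow N X w $$ (i, j))
           has_sum sandwich N e1 (Kp m p N X M Y) e2 $$ (i, j)) (allwords m)"
proof -
  have "((\<lambda>w. \<Sum>a<M. \<Sum>b<M. cnj (e1 $ a) * (of_real (p ^ length w) * mpow N X w $$ (i, j) * cnj (mpow M Y w $$ (b, a))) * e2 $ b)
      has_sum (\<Sum>a<M. \<Sum>b<M. cnj (e1 $ a) * Kp m p N X M Y $$ (i * M + a, j * M + b) * e2 $ b)) (allwords m)"
    by (intro has_sum_sum_finite finite_lessThan has_sum_cmult_left has_sum_cmult_right
        Kp_index_has_sum[OF XU YU p ij]) auto
  moreover have "(\<Sum>a<M. \<Sum>b<M. cnj (e1 $ a) * (of_real (p ^ length w) * mpow N X w $$ (i, j) * cnj (mpow M Y w $$ (b, a))) * e2 $ b)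
      = kernel_coef p M Y e1 e2 w * mpow N X w $$ (i, j)" for w
  proof -
    have "cnj (word_sandwich M Y e2 e1 w) = (\<Sum>b<M. \<Sum>a<M. cnj (e1 $ a) * cnj (mpow M Y w $$ (b, a)) * e2 $ b)"
      by (simp add: word_sandwich_def mult.commute mult.left_commute)
    also have "\<dots> = (\<Sum>a<M. \<Sum>b<M. cnj (e1 $ a) * cnj (mpow M Y w $$ (b, a)) * e2 $ b)"
      by (rule sum.swap)
    finally show ?thesis
      by (simp add: kernel_coef_def sum_distrib_left sum_distrib_right mult.commute mult.left_commute)
  qed
  moreover have "Kp m p N X M Y \<in> carrier_mat (N * M) (N * M)"
    by (simp add: Kp_def)
  ultimately show ?thesis
    using sandwich_index[OF _ e ij M] by simp
qed

locale nc_expansion =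
  fixes m :: nat and D :: "(nat \<times> complex mat list) set"
    and c :: "nat list \<Rightarrow> complex" and F :: "nat \<times> complex mat list \<Rightarrow> complex mat"
  assumes domain_ncpt: "(N, X) \<in> D \<Longrightarrow> ncpt m N X"
    and carrier: "(N, X) \<in> D \<Longrightarrow> F (N, X) \<in> carrier_mat N N"
    and expansion: "(N, X) \<in> D \<Longrightarrow> i < N \<Longrightarrow> j < N \<Longrightarrow>
      ((\<lambda>w. c w * mpow N X w $$ (i, j)) has_sum F (N, X) $$ (i, j)) (allwords m)"
begin

lemma index_eq_infsum:
  "(N, X) \<in> D \<Longrightarrow> i < N \<Longrightarrow> j < N \<Longrightarrow> F (N, X) $$ (i, j) = (\<Sum>\<^sub>\<infinity>w\<in>allwords m. c w * mpow N X w $$ (i, j))"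
  by (intro infsumI[symmetric] expansion)

lemma direct_sum:
  assumes XD: "(N, X) \<in> D" and X'D: "(N', X') \<in> D"
    and ZD: "(N + N', map2 (\<lambda>A B. four_block_mat A (0\<^sub>m N N') (0\<^sub>m N' N) B) X X') \<in> D"
  shows "F (N + N', map2 (\<lambda>A B. four_block_mat A (0\<^sub>m N N') (0\<^sub>m N' N) B) X X')
       = four_block_mat (F (N, X)) (0\<^sub>m N N') (0\<^sub>m N' N) (F (N', X'))"
    (is "F (_, ?Z) = ?B")
proof (rule eq_matI)
  have cF: "F (N, X) \<in> carrier_mat N N" "F (N', X') \<in> carrier_mat N' N'"
    "F (N + N', ?Z) \<in> carrier_mat (N + N') (N + N')"
    using XD X'D ZD by (auto intro: carrier)
  then show "dim_row (F (N + N', ?Z)) = dim_row ?B" "dim_col (F (N + N', ?Z)) = dim_col ?B"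
    by auto
  fix i j assume "i < dim_row ?B" "j < dim_col ?B"
  then have ij: "i < N + N'" "j < N + N'" using cF by auto
  have "mpow (N + N') ?Z w $$ (i, j) = (if i < N then if j < N then mpow N X w $$ (i, j) else 0
      else if j < N then 0 else mpow N' X' w $$ (i - N, j - N))" if "w \<in> allwords m" for w
  proof -
    have w: "set w \<subseteq> {..<m}" using that by (simp add: allwords_def)
    have "mpow N X w \<in> carrier_mat N N" "mpow N' X' w \<in> carrier_mat N' N'"
      using mpow_carrier[OF domain_ncpt[OF XD] w] mpow_carrier[OF domain_ncpt[OF X'D] w] .
    with ij show ?thesis
      by (simp add: mpow_direct_sum[OF domain_ncpt[OF XD] domain_ncpt[OF X'D] w])
  qed
  then have "F (N + N', ?Z) $$ (i, j) = (\<Sum>\<^sub>\<infinity>w\<in>allwords m. c w * (if i < N then if j < N then mpow N X w $$ (i, j) else 0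
      else if j < N then 0 else mpow N' X' w $$ (i - N, j - N)))"
    unfolding index_eq_infsum[OF ZD ij] by (intro infsum_cong) simp
  then show "F (N + N', ?Z) $$ (i, j) = ?B $$ (i, j)"
    using cF ij by (auto simp: index_eq_infsum[OF XD] index_eq_infsum[OF X'D])
qed

lemma similar:
  assumes XD: "(N, X) \<in> D" and S: "S \<in> carrier_mat N N" and T: "T \<in> carrier_mat N N"
    and ST: "S * T = 1\<^sub>m N" and TS: "T * S = 1\<^sub>m N" and SD: "(N, map (\<lambda>A. S * A * T) X) \<in> D"
  shows "F (N, map (\<lambda>A. S * A * T) X) = S * F (N, X) * T"
proof (rule eq_matI)
  have cF: "F (N, X) \<in> carrier_mat N N" "F (N, map (\<lambda>A. S * A * T) X) \<in> carrier_mat N N"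
    using XD SD by (auto intro: carrier)
  then show "dim_row (F (N, map (\<lambda>A. S * A * T) X)) = dim_row (S * F (N, X) * T)"
    "dim_col (F (N, map (\<lambda>A. S * A * T) X)) = dim_col (S * F (N, X) * T)"
    using S T by auto
  fix i j assume "i < dim_row (S * F (N, X) * T)" "j < dim_col (S * F (N, X) * T)"
  then have ij: "i < N" "j < N" using S T by auto
  have combined: "((\<lambda>w. \<Sum>k<N. (\<Sum>l<N. S $$ (i, l) * (c w * mpow N X w $$ (l, k))) * T $$ (k, j))
      has_sum (S * F (N, X) * T) $$ (i, j)) (allwords m)"
    unfolding mult3_index[OF S cF(1) T ij] by (intro has_sum_sum_finite finite_lessThan has_sum_cmult_left has_sum_cmult_right expansion[OF XD]) auto
  have term_eq: "(\<Sum>k<N. (\<Sum>l<N. S $$ (i, l) * (c w * mpow N X w $$ (l, k))) * T $$ (k, j))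
      = c w * mpow N (map (\<lambda>A. S * A * T) X) w $$ (i, j)" if "w \<in> allwords m" for w
  proof -
    have w: "set w \<subseteq> {..<m}" using that by (simp add: allwords_def)
    have inner: "(\<Sum>l<N. S $$ (i, l) * (c w * mpow N X w $$ (l, k))) = c w * (\<Sum>l<N. S $$ (i, l) * mpow N X w $$ (l, k))"
      for k by (simp add: sum_distrib_left mult.left_commute)
    have pull: "(\<Sum>k<N. a * Z k * t k) = a * (\<Sum>k<N. Z k * t k)" for a :: complex and Z t
      by (simp add: sum_distrib_left mult.assoc)
    show ?thesis
      unfolding inner pull mpow_similar[OF domain_ncpt[OF XD] S T ST TS w]
        mult3_index[OF S mpow_carrier[OF domain_ncpt[OF XD] w] T ij] ..
  qed
  have "((\<lambda>w. c w * mpow N (map (\<lambda>A. S * A * T) X) w $$ (i, j))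
      has_sum (S * F (N, X) * T) $$ (i, j)) (allwords m)"
    using iffD1[OF has_sum_cong[OF term_eq] combined] .
  then show "F (N, map (\<lambda>A. S * A * T) X) $$ (i, j) = (S * F (N, X) * T) $$ (i, j)"
    using expansion[OF SD ij] has_sum_unique by blast
qed

lemma nc_function: "nc_function m D F"
  unfolding nc_function_def using carrier direct_sum similar by auto

end

lemma h2_repI:
  assumes "ell2p m p c"
    and "\<And>N X. (N, X) \<in> upsilon m p \<Longrightarrow> F (N, X) \<in> carrier_mat N N"
    and "\<And>N X i j. (N, X) \<in> upsilon m p \<Longrightarrow> i < N \<Longrightarrow> j < N \<Longrightarrow>
      ((\<lambda>w. c w * mpow N X w $$ (i, j)) has_sum F (N, X) $$ (i, j)) (allwords m)"
  shows "h2_rep m p F c"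
  using assms has_sum_imp_sums_by_length unfolding h2_rep_def by blast

lemma in_H2I:
  assumes "ell2p m p c"
    and "\<And>N X. (N, X) \<in> upsilon m p \<Longrightarrow> F (N, X) \<in> carrier_mat N N"
    and "\<And>N X i j. (N, X) \<in> upsilon m p \<Longrightarrow> i < N \<Longrightarrow> j < N \<Longrightarrow>
      ((\<lambda>w. c w * mpow N X w $$ (i, j)) has_sum F (N, X) $$ (i, j)) (allwords m)"
  shows "in_H2 m p F"
proof -
  interpret nc_expansion m "upsilon m p" c F
    using assms(2,3) by unfold_locales (auto intro: upsilon_ncpt)
  show ?thesis unfolding in_H2_def using nc_function h2_repI[OF assms] by blast
qed

text \<open>The test point for the coefficient of \<open>w\<close>: \<open>X\<^sub>i\<close> has an entry \<open>1\<close> at \<open>(k, k + 1)\<close> whenever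
  \<open>w ! k = i\<close>, so the \<open>(0, |w|)\<close> entry of \<open>X\<^sup>v\<close> is \<open>1\<close> if \<open>v = w\<close> and \<open>0\<close> otherwise.\<close>
definition shift_point :: "nat \<Rightarrow> nat list \<Rightarrow> complex mat list" where
  "shift_point m w = map (\<lambda>i. mat (Suc (length w)) (Suc (length w))
      (\<lambda>(k, l). if l = Suc k \<and> k < length w \<and> w ! k = i then 1 else 0)) [0..<m]"

lemma shift_point_ncpt: "ncpt m (Suc (length w)) (shift_point m w)"
  by (auto simp: ncpt_def shift_point_def)

lemma mpow_shift_point_index:
  assumes "set v \<subseteq> {..<m}" "a < Suc (length w)" "b < Suc (length w)"
  shows "mpow (Suc (length w)) (shift_point m w) v $$ (a, b)
     = (if b = a + length v \<and> (\<forall>k<length v. w ! (a + k) = v ! k) then 1 else 0)"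
  using assms
proof (induction v arbitrary: a)
  case (Cons i v)
  define N where "N = Suc (length w)"
  have i: "i < m" and v: "set v \<subseteq> {..<m}" using Cons.prems by auto
  have cV: "mpow N (shift_point m w) v \<in> carrier_mat N N"
    unfolding N_def by (rule mpow_carrier[OF shift_point_ncpt v])
  have cXi: "shift_point m w ! i \<in> carrier_mat N N"
    using i by (simp add: shift_point_def N_def)
  have Xi: "shift_point m w ! i $$ (a, c) = (if c = Suc a \<and> a < length w \<and> w ! a = i then 1 else 0)"
    if "c < N" for c
    using i that Cons.prems(2) by (simp add: shift_point_def N_def)
  have "mpow N (shift_point m w) (i # v) $$ (a, b)
      = (\<Sum>c<N. shift_point m w ! i $$ (a, c) * mpow N (shift_point m w) v $$ (c, b))"
    using cV cXi Cons.prems(2,3) unfolding N_def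
    by (auto simp: scalar_prod_def lessThan_atLeast0 intro!: sum.cong)
  also have "\<dots> = (\<Sum>c<N. if c = Suc a then
      (if a < length w \<and> w ! a = i then mpow N (shift_point m w) v $$ (c, b) else 0) else 0)"
    by (rule sum.cong) (auto simp: Xi)
  also have "\<dots> = (if a < length w \<and> w ! a = i then mpow N (shift_point m w) v $$ (Suc a, b) else 0)"
    by (simp add: N_def)
  also have "\<dots> = (if b = a + length (i # v) \<and> (\<forall>k<length (i # v). w ! (a + k) = (i # v) ! k) then 1 else 0)"
    using Cons.IH[OF v _ Cons.prems(3)] Cons.prems(3)
    by (auto simp: N_def All_less_Suc2 less_Suc_eq_0_disj)
  finally show ?case unfolding N_def .
qed simp

lemma shift_point_upsilon: "(Suc (length w), shift_point m w) \<in> upsilon m p"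
  unfolding upsilon_def
proof (clarify, intro conjI allI impI)
  show "ncpt m (Suc (length w)) (shift_point m w)" by (rule shift_point_ncpt)
  fix i j assume ij: "i < Suc (length w)" "j < Suc (length w)"
  have "mpow (Suc (length w)) (shift_point m w) v = 0\<^sub>m (Suc (length w)) (Suc (length w))"
    if "v \<in> words m l" "length w < l" for v l
    using that mpow_carrier[OF shift_point_ncpt] mpow_shift_point_index
    by (intro eq_matI) (auto simp: words_def)
  then show "summable (\<lambda>l. \<Sum>v\<in>words m l. complex_of_real (p ^ l) *
      (mat_adjoint (mpow (Suc (length w)) (shift_point m w) v) * mpow (Suc (length w)) (shift_point m w) v) $$ (i, j))"
    using ij by (intro summable_finite[of "{..length w}"]) (auto intro!: sum.neutral)
qed

lemma mpow_shift_point_corner: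
  assumes "set v \<subseteq> {..<m}"
  shows "mpow (Suc (length w)) (shift_point m w) v $$ (0, length w) = (if v = w then 1 else 0)"
  using mpow_shift_point_index[OF assms, of 0 w "length w"] by (auto simp: list_eq_iff_nth_eq)

lemma h2_rep_coef_unique:
  assumes c1: "h2_rep m p f c1" and c2: "h2_rep m p f c2" and w: "w \<in> allwords m"
  shows "c1 w = c2 w"
proof -
  define L where "L = length w"
  define X where "X = shift_point m w"
  have XU: "(Suc L, X) \<in> upsilon m p" unfolding L_def X_def by (rule shift_point_upsilon)
  have "f (Suc L, X) $$ (0, L) = c w" if c: "h2_rep m p f c" for c
  proof -
    have "(\<Sum>v\<in>words m l. c v * mpow (Suc L) X v $$ (0, L)) = (\<Sum>v\<in>words m l. if v = w then c v else 0)" for l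
      unfolding X_def L_def by (intro sum.cong refl) (simp add: mpow_shift_point_corner words_def)
    also have "\<dots> l = (if w \<in> words m l then c w else 0)" for l
      by (simp add: sum.delta')
    also have "\<dots> l = (if l = L then c w else 0)" for l
      using w by (auto simp: L_def words_def allwords_def)
    finally have "(\<lambda>l. \<Sum>v\<in>words m l. c v * mpow (Suc L) X v $$ (0, L)) sums c w"
      using sums_single[of L "\<lambda>_. c w"] by simp
    moreover have "(\<lambda>l. \<Sum>v\<in>words m l. c v * mpow (Suc L) X v $$ (0, L)) sums f (Suc L, X) $$ (0, L)"
      using c XU unfolding h2_rep_def by auto
    ultimately show ?thesis using sums_unique2 by blast
  qed
  from this[OF c1] this[OF c2] show ?thesis by simp
qed

lemma h2_coef_eq:
  assumes "h2_rep m p f c" "w \<in> allwords m"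
  shows "h2_coef m p f w = c w"
proof -
  have "h2_rep m p f (h2_coef m p f)"
    unfolding h2_coef_def using assms(1) by (rule someI[where P = "h2_rep m p f"])
  then show ?thesis using assms by (rule h2_rep_coef_unique)
qed

lemma h2_inner_eq:
  assumes "h2_rep m p f c" "h2_rep m p g d"
  shows "h2_inner m p f g = (\<Sum>\<^sub>\<infinity>w\<in>allwords m. of_real (inverse (p ^ length w)) * c w * cnj (d w))"
  unfolding h2_inner_def using assms by (intro infsum_cong) (simp add: h2_coef_eq)

lemma h2_rep_has_sum:
  assumes f: "h2_rep m p f c" and YU: "(M, Y) \<in> upsilon m p" and p: "p > 0" and ab: "a < M" "b < M"
  shows "((\<lambda>w. c w * mpow M Y w $$ (a, b)) has_sum f (M, Y) $$ (a, b)) (allwords m)"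
proof -
  have "ell2p m p c" using f by (simp add: h2_rep_def)
  then have "(\<lambda>w. c w * mpow M Y w $$ (a, b)) summable_on allwords m"
    using upsilon_entry_ell2p[OF YU p ab] p by (rule summable_on_mult_ell2p)
  then have S: "((\<lambda>w. c w * mpow M Y w $$ (a, b)) has_sum (\<Sum>\<^sub>\<infinity>w\<in>allwords m. c w * mpow M Y w $$ (a, b)))
      (allwords m)"
    by (rule has_sum_infsum)
  have "(\<lambda>l. \<Sum>w\<in>words m l. c w * mpow M Y w $$ (a, b)) sums f (M, Y) $$ (a, b)"
    using f YU ab unfolding h2_rep_def by auto
  with has_sum_imp_sums_by_length[OF S] have "(\<Sum>\<^sub>\<infinity>w\<in>allwords m. c w * mpow M Y w $$ (a, b)) = f (M, Y) $$ (a, b)"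
    by (rule sums_unique2)
  with S show ?thesis by simp
qed

lemma h2_rep_reproducing:
  assumes f: "h2_rep m p f c" and YU: "(M, Y) \<in> upsilon m p" and p: "p > 0"
    and e: "e1 \<in> carrier_vec M" "e2 \<in> carrier_vec M"
  shows "((\<lambda>w. c w * word_sandwich M Y e1 e2 w) has_sum (vstar e1 * f (M, Y) * vcol e2) $$ (0, 0))
    (allwords m)"
proof -
  have "f (M, Y) \<in> carrier_mat M M" using f YU unfolding h2_rep_def by auto
  then have "(vstar e1 * f (M, Y) * vcol e2) $$ (0, 0) = (\<Sum>a<M. \<Sum>b<M. cnj (e1 $ a) * f (M, Y) $$ (a, b) * e2 $ b)"
    using e by (rule vstar_mult_vcol_index)
  moreover have "((\<lambda>w. \<Sum>a<M. \<Sum>b<M. cnj (e1 $ a) * (c w * mpow M Y w $$ (a, b)) * e2 $ b)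
      has_sum (\<Sum>a<M. \<Sum>b<M. cnj (e1 $ a) * f (M, Y) $$ (a, b) * e2 $ b)) (allwords m)"
    by (intro has_sum_sum_finite finite_lessThan has_sum_cmult_left has_sum_cmult_right
        h2_rep_has_sum[OF f YU p]) auto
  moreover have "(\<Sum>a<M. \<Sum>b<M. cnj (e1 $ a) * (c w * mpow M Y w $$ (a, b)) * e2 $ b)
      = c w * word_sandwich M Y e1 e2 w" for w
    by (simp add: word_sandwich_def sum_distrib_left mult.assoc mult.left_commute)
  ultimately show ?thesis by simp
qed

theorem proposition3p14:
  fixes m M :: nat and p :: real and Y :: "complex mat list"
  assumes "p > 0" and "M > 0" and "(M, Y) \<in> upsilon m p"
  shows "(\<forall>e1 e2. e1 \<in> carrier_vec M \<longrightarrow> e2 \<in> carrier_vec M \<longrightarrow>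
            in_H2 m p (\<lambda>(N, X). sandwich N e1 (Kp m p N X M Y) e2))
       \<and> (\<forall>e1 e2 f. e1 \<in> carrier_vec M \<longrightarrow> e2 \<in> carrier_vec M \<longrightarrow> in_H2 m p f \<longrightarrow>
            h2_inner m p f (\<lambda>(N, X). sandwich N e1 (Kp m p N X M Y) e2)
              = (vstar e2 * f (M, Y) * vcol e1) $$ (0, 0))"
proof (intro conjI allI impI)
  fix e1 e2 :: "complex vec" assume e: "e1 \<in> carrier_vec M" "e2 \<in> carrier_vec M"
  let ?K = "\<lambda>(N, X). sandwich N e1 (Kp m p N X M Y) e2"
  have K: "h2_rep m p ?K (kernel_coef p M Y e1 e2)" "in_H2 m p ?K"
    using kernel_coef_ell2p[OF assms(3,1)] sandwich_carrier sandwich_Kp_has_sum[OF _ assms(3,1) e _ _ assms(2)]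
    by (auto intro!: h2_repI in_H2I)
  then show "in_H2 m p ?K" by simp
  fix f :: "nat \<times> complex mat list \<Rightarrow> complex mat" assume "in_H2 m p f"
  then obtain c where c: "h2_rep m p f c" unfolding in_H2_def by blast
  have "of_real (inverse (p ^ length w)) * c w * cnj (kernel_coef p M Y e1 e2 w) = c w * word_sandwich M Y e2 e1 w"
    for w
    using assms(1) by (simp add: kernel_coef_def field_simps)
  then have "h2_inner m p f ?K = (\<Sum>\<^sub>\<infinity>w\<in>allwords m. c w * word_sandwich M Y e2 e1 w)"
    unfolding h2_inner_eq[OF c K(1)] by (intro infsum_cong)
  also have "\<dots> = (vstar e2 * f (M, Y) * vcol e1) $$ (0, 0)"
    using h2_rep_reproducing[OF c assms(3,1) e(2,1)] by (rule infsumI)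
  finally show "h2_inner m p f ?K = (vstar e2 * f (M, Y) * vcol e1) $$ (0, 0)" .
qed

end
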